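(* For every integer $n\geq 1$ let $\kappa_n\in(0,1/2)$ be the unique solution in $(0,1/2)$ of $(2+2\kappa)^n\kappa=1$, and let $f_n(x)=x^n(x-2)-2$ and $g_n(x)=x^n(x-2)+2$. Then: (i) the number $2+2\kappa_n$, which is the spectral radius of the matrix $A_n$ described in the context, is a root of $f_n$, and $\kappa_n\sim 2^{-n}$ (i.e. $2^n\kappa_n\to 1$ as $n\to\infty$); (ii) for every $n\geq 5$, $g_n$ has a real root of the form $2-2r_n<2$ (so $r_n>0$), where $r_n\sim\kappa_n$ (i.e. $r_n/\kappa_n\to1$ as $n\to\infty$); (iii) for every $n\geq 1$, all roots of $f_n$ other than $2+2\kappa_n$ and all roots of $g_n$ other than $2-2r_n$ (the latter exclusion only when $n\geq5$) have modulus strictly greater than $1-n^{-1}$; (iv) for every $n\geq 6$, all roots of $f_n$ other than $2+2\kappa_n$ and all roots of $g_n$ other than $2-2r_n$ have modulus strictly less than $1+n^{-1}$.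
   Context: For $\kappa\in(0,1/2)$, the paired tent map $T_\kappa:[-1,1]\to[-1,1]$ is $T_\kappa(x)=2(1+\kappa)(x+1)-1$ for $x\in[-1,-1/2]$, $T_\kappa(x)=-2(1+\kappa)x-1$ for $x\in[-1/2,0)$, $T_\kappa(0)=0$, $T_\kappa(x)=-2(1+\kappa)x+1$ for $x\in(0,1/2]$, $T_\kappa(x)=2(1+\kappa)(x-1)+1$ for $x\in[1/2,1]$. Write $T_n=T_{\kappa_n}$. Let $r_0<r_1<\dots<r_{2n+4}$ be the increasing enumeration of the $2n+5$ distinct points of $\{-1,-1/2,0,1/2,1\}\cup\{T_n^i(\pm\kappa_n):0\le i\le n-1\}$, and $R_i=(r_{i-1},r_i)$ for $1\le i\le 2n+4$. $A_n$ is the $(2n+4)\times(2n+4)$ adjacency matrix with entries $a_{ij}=1$ if $R_i\subset T_n(R_j)$ and $a_{ij}=0$ otherwise. *)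

theory Defs
  imports Complex_Main
begin

definition f_poly :: "nat \<Rightarrow> 'a::comm_ring_1 \<Rightarrow> 'a" where
  "f_poly n x = x ^ n * (x - 2) - 2"

definition g_poly :: "nat \<Rightarrow> 'a::comm_ring_1 \<Rightarrow> 'a" where
  "g_poly n x = x ^ n * (x - 2) + 2"

end

theory Submission
  imports Defs
begin

text \<open>Every complex root z of f_n or g_n satisfies |z^n (z - 2)| = 2. For |z| \<le> 1 - 1/n the
  left side is at most 3 (1 - 1/n)^n \<le> 3/e < 2. For 1 + 1/n \<le> |z| < 3/2 it is at least
  |z|^n (2 - |z|) \<ge> (1 + 1/n)^n (1 - 1/n) > 2 once n \<ge> 6, because t^n (2 - t) increases there.
  Roots with |z| \<ge> 3/2 are fixed points of z \<mapsto> 2 \<plusminus> 2 z^-n, which is a contraction on that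
  region, so the real roots 2 + 2\<kappa>_n and 2 - 2r_n are the only ones there. Finally
  2^n (1 + \<kappa>_n)^n \<kappa>_n = 1 = 2^n (1 - r_n)^n r_n with \<kappa>_n, r_n exponentially small, so
  both n-th powers tend to 1 by Bernoulli's inequality and 1 + x \<le> e^x.\<close>

lemma f_poly_eq_0_iff: "f_poly n z = 0 \<longleftrightarrow> z ^ n * (z - 2) = 2"
  by (simp add: f_poly_def)

lemma g_poly_eq_0_iff: "g_poly n z = 0 \<longleftrightarrow> z ^ n * (z - 2) = - 2"
  by (simp add: g_poly_def add_eq_0_iff2)

lemma f_poly_two_plus_eq_0_iff: "f_poly n (2 + 2 * k) = 0 \<longleftrightarrow> (2 + 2 * k) ^ n * k = (1::real)"
  by (auto simp: f_poly_def algebra_simps)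

lemma g_poly_two_minus_eq_0_iff: "g_poly n (2 - 2 * r) = 0 \<longleftrightarrow> (2 - 2 * r) ^ n * r = (1::real)"
  by (auto simp: g_poly_def algebra_simps)

lemma g_poly_real_root:
  assumes "n \<ge> 4"
  shows "\<exists>r::real. 0 < r \<and> r < 1/4 \<and> g_poly n (2 - 2 * r) = 0"
proof -
  have "4 < (3/2::real) ^ 4"
    by (simp add: power_divide)
  also have "\<dots> \<le> (3/2) ^ n"
    using assms by (intro power_increasing) auto
  finally have big: "4 < (3/2::real) ^ n" .
  have "continuous_on {3/2..2} (g_poly n :: real \<Rightarrow> real)"
    unfolding g_poly_def by (intro continuous_intros)
  moreover have neg: "g_poly n (3/2::real) < 0" and pos: "0 < g_poly n (2::real)"
    using big by (simp_all add: g_poly_def)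
  ultimately obtain x :: real where x: "3/2 \<le> x" "x \<le> 2" "g_poly n x = 0"
    using IVT'[of "g_poly n" "3/2::real" 0 2] by auto
  moreover have "x \<noteq> 3/2" "x \<noteq> 2"
    using neg pos x(3) by force+
  ultimately show ?thesis
    by (intro exI[of _ "1 - x/2"]) auto
qed

lemma one_minus_inverse_power_le_half:
  assumes "n \<ge> 1"
  shows "(1 - 1 / real n) ^ n \<le> 1/2"
proof -
  have "(1 - 1 / real n) ^ n \<le> exp (- 1 / real n) ^ n"
    using assms exp_ge_add_one_self[of "- 1 / real n"] by (intro power_mono) auto
  also have "\<dots> = exp (-1)"
    using assms by (simp flip: exp_of_nat_mult)
  also have "\<dots> \<le> 1/2"
    using exp_ge_add_one_self[of 1] by (simp add: exp_minus field_simps)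
  finally show ?thesis .
qed

lemma one_minus_inverse_lt_norm:
  fixes z :: "'a::real_normed_field"
  assumes n: "n \<ge> 1" and z: "2 \<le> norm (z ^ n * (z - 2))"
  shows "1 - 1 / real n < norm z"
proof (rule ccontr)
  assume "\<not> 1 - 1 / real n < norm z"
  then have small: "norm z \<le> 1 - 1 / real n"
    by simp
  have "norm z ^ n \<le> 1/2"
    using small one_minus_inverse_power_le_half[OF n] by (meson norm_ge_zero power_mono order_trans)
  moreover have "norm (z - 2) \<le> 3"
  proof -
    have "norm (z - 2) \<le> norm z + 2"
      using norm_triangle_ineq4[of z 2] by simp
    moreover have "0 \<le> 1 / real n"
      by simp
    ultimately show ?thesis
      using small by linarith
  qed
  ultimately have "norm (z ^ n * (z - 2)) \<le> 1/2 * 3"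
    unfolding norm_mult norm_power by (intro mult_mono) auto
  with z show False
    by simp
qed

lemma power_one_plus_ge_quadratic:
  fixes x :: real
  assumes "0 \<le> x"
  shows "1 + real n * x + real n * (real n - 1) / 2 * x\<^sup>2 \<le> (1 + x) ^ n"
proof (induction n)
  case 0
  then show ?case by simp
next
  case (Suc n)
  have "0 \<le> real n * (real n - 1) / 2 * x ^ 3"
    using assms by (cases n) auto
  then have "1 + real (Suc n) * x + real (Suc n) * (real (Suc n) - 1) / 2 * x\<^sup>2
      \<le> (1 + x) * (1 + real n * x + real n * (real n - 1) / 2 * x\<^sup>2)"
    by (simp add: field_simps power2_eq_square power3_eq_cube)
  also have "\<dots> \<le> (1 + x) * (1 + x) ^ n"
    using Suc assms by (intro mult_left_mono) auto
  finally show ?case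
    by simp
qed

lemma two_lt_one_plus_inverse_power:
  assumes "n \<ge> 6"
  shows "2 < (1 + 1 / real n) ^ n * (1 - 1 / real n)"
proof -
  have n: "6 \<le> real n"
    using assms by simp
  have "1 + real n * (1 / real n) + real n * (real n - 1) / 2 * (1 / real n)\<^sup>2
      = 2 + (real n - 1) / (2 * real n)"
    using n by (simp add: field_simps power2_eq_square)
  then have quadratic: "2 + (real n - 1) / (2 * real n) \<le> (1 + 1 / real n) ^ n"
    using power_one_plus_ge_quadratic[of "1 / real n" n] by simp
  have "(2 + (real n - 1) / (2 * real n)) * (1 - 1 / real n) - 2
      = (real n * (real n - 6) + 1) / (2 * (real n)\<^sup>2)"
    using n by (simp add: field_simps power2_eq_square)
  also have "\<dots> > 0"
    using n by (intro divide_pos_pos add_nonneg_pos mult_nonneg_nonneg) auto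
  finally have "2 < (2 + (real n - 1) / (2 * real n)) * (1 - 1 / real n)"
    by simp
  also have "\<dots> \<le> (1 + 1 / real n) ^ n * (1 - 1 / real n)"
    using quadratic n by (intro mult_right_mono) auto
  finally show ?thesis .
qed

lemma power_mult_two_minus_mono:
  fixes a b :: real
  assumes "0 \<le> a" "a \<le> b" "(real n + 1) * b \<le> 2 * real n"
  shows "a ^ n * (2 - a) \<le> b ^ n * (2 - b)"
proof (cases n)
  case 0
  then show ?thesis
    using assms by simp
next
  case (Suc m)
  show ?thesis
  proof (rule DERIV_nonneg_imp_nondecreasing[OF \<open>a \<le> b\<close>])
    fix x
    assume x: "a \<le> x" "x \<le> b"
    have "((\<lambda>x. x ^ n * (2 - x)) has_real_derivative real n * x ^ (n - 1) * (2 - x) - x ^ n) (at x)"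
      by (auto intro!: derivative_eq_intros)
    moreover have "real n * x ^ (n - 1) * (2 - x) - x ^ n = x ^ m * (2 * real n - (real n + 1) * x)"
      unfolding Suc by (simp add: algebra_simps)
    ultimately have "((\<lambda>x. x ^ n * (2 - x))
        has_real_derivative x ^ m * (2 * real n - (real n + 1) * x)) (at x)"
      by simp
    moreover have "0 \<le> x ^ m * (2 * real n - (real n + 1) * x)"
    proof (rule mult_nonneg_nonneg)
      show "0 \<le> x ^ m"
        using assms(1) x(1) by simp
      have "(real n + 1) * x \<le> (real n + 1) * b"
        using x(2) by (intro mult_left_mono) auto
      then show "0 \<le> 2 * real n - (real n + 1) * x"
        using assms(3) by linarith
    qed
    ultimately show "\<exists>y. ((\<lambda>x. x ^ n * (2 - x)) has_real_derivative y) (at x) \<and> 0 \<le> y"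
      by blast
  qed
qed

lemma three_halves_le_norm_if_root:
  fixes z :: "'a::real_normed_field"
  assumes n: "n \<ge> 6" and z: "norm (z ^ n * (z - 2)) \<le> 2" and large: "1 + 1 / real n \<le> norm z"
  shows "3/2 \<le> norm z"
proof (rule ccontr)
  assume "\<not> 3/2 \<le> norm z"
  then have "(real n + 1) * norm z \<le> (real n + 1) * (3/2)"
    by (intro mult_left_mono) auto
  then have "(real n + 1) * norm z \<le> 2 * real n"
    using n by simp
  then have "(1 + 1 / real n) ^ n * (2 - (1 + 1 / real n)) \<le> norm z ^ n * (2 - norm z)"
    using large by (intro power_mult_two_minus_mono) auto
  also have "\<dots> \<le> norm z ^ n * norm (z - 2)"
    using norm_triangle_ineq2[of 2 z] by (intro mult_left_mono) (auto simp: norm_minus_commute)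
  also have "\<dots> \<le> 2"
    using z by (simp add: norm_mult norm_power)
  finally show False
    using two_lt_one_plus_inverse_power[OF n] by simp
qed

lemma norm_power_diff_le:
  fixes w1 w2 :: "'a::real_normed_field"
  assumes "norm w1 \<le> M" "norm w2 \<le> M"
  shows "norm (w1 ^ Suc n - w2 ^ Suc n) \<le> real (Suc n) * M ^ n * norm (w1 - w2)"
proof (induction n)
  case 0
  then show ?case by simp
next
  case (Suc n)
  have "w1 ^ Suc (Suc n) - w2 ^ Suc (Suc n)
      = w1 * (w1 ^ Suc n - w2 ^ Suc n) + (w1 - w2) * w2 ^ Suc n"
    by (simp add: algebra_simps)
  also have "norm \<dots> \<le> M * (real (Suc n) * M ^ n * norm (w1 - w2)) + norm (w1 - w2) * M ^ Suc n"
  proof (rule norm_triangle_le, rule add_mono)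
    have "0 \<le> M"
      using assms(1) norm_ge_zero order_trans by blast
    then show "norm (w1 * (w1 ^ Suc n - w2 ^ Suc n))
        \<le> M * (real (Suc n) * M ^ n * norm (w1 - w2))"
      unfolding norm_mult using assms(1) Suc by (intro mult_mono) auto
    show "norm ((w1 - w2) * w2 ^ Suc n) \<le> norm (w1 - w2) * M ^ Suc n"
      unfolding norm_mult norm_power using assms(2) by (intro mult_left_mono power_mono) auto
  qed
  also have "\<dots> = real (Suc (Suc n)) * M ^ Suc n * norm (w1 - w2)"
    by (simp add: algebra_simps)
  finally show ?case .
qed

lemma two_mult_geometric_lt_1:
  assumes "n \<ge> 6"
  shows "2 * real n * (2/3) ^ (n + 1) < 1"
  using assms
proof (induction n rule: nat_induct_at_least)
  case base
  then show ?case by (simp add: power_divide)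
next
  case (Suc n)
  have "2 * real (Suc n) * (2/3) ^ (Suc n + 1) = (2/3 * (real n + 1)) * (2 * (2/3) ^ (n + 1))"
    by simp
  also have "\<dots> \<le> real n * (2 * (2/3) ^ (n + 1))"
    using Suc by (intro mult_right_mono) auto
  also have "\<dots> = 2 * real n * (2/3) ^ (n + 1)"
    by simp
  also have "\<dots> < 1"
    by (rule Suc.IH)
  finally show ?case .
qed

lemma diff_two_eq_mult_inverse_power:
  fixes z s :: "'a::field"
  assumes "z ^ n * (z - 2) = s" "z \<noteq> 0"
  shows "z - 2 = s * inverse z ^ n"
proof -
  have "s * inverse z ^ n = (z - 2) * (z * inverse z) ^ n"
    unfolding assms(1)[symmetric] power_mult_distrib by (simp add: mult_ac)
  then show ?thesis
    using assms(2) by simp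
qed

lemma norm_inverse_le_two_thirds:
  fixes z :: "'a::real_normed_div_algebra"
  assumes "3/2 \<le> norm z"
  shows "norm (inverse z) \<le> 2/3"
proof -
  have "norm (inverse z) \<le> inverse (3/2)"
    unfolding norm_inverse using assms by (intro le_imp_inverse_le) auto
  then show ?thesis
    by simp
qed

lemma large_roots_unique:
  fixes z1 z2 s :: "'a::real_normed_field"
  assumes n: "n \<ge> 6" and s: "norm s \<le> 2"
    and root1: "z1 ^ n * (z1 - 2) = s" and root2: "z2 ^ n * (z2 - 2) = s"
    and large1: "3/2 \<le> norm z1" and large2: "3/2 \<le> norm z2"
  shows "z1 = z2"
proof -
  obtain m where m: "n = Suc m"
    using n by (cases n) auto
  define c where "c = 2 * real n * (2/3) ^ (n + 1)"
  define w1 where "w1 = inverse z1"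
  define w2 where "w2 = inverse z2"
  have nonzero: "z1 \<noteq> 0" "z2 \<noteq> 0"
    using large1 large2 by auto
  have small: "norm w1 \<le> 2/3" "norm w2 \<le> 2/3"
    unfolding w1_def w2_def using large1 large2 by (simp_all only: norm_inverse_le_two_thirds)
  have "z1 - 2 = s * w1 ^ n" "z2 - 2 = s * w2 ^ n"
    unfolding w1_def w2_def using root1 root2 nonzero by (auto intro: diff_two_eq_mult_inverse_power)
  then have diff: "z1 - z2 = s * (w1 ^ n - w2 ^ n)"
    by (simp add: algebra_simps)
  have "norm (w1 - w2) = norm w1 * norm (z1 - z2) * norm w2"
    using nonzero by (simp add: w1_def w2_def inverse_diff_inverse norm_mult)
  also have "\<dots> \<le> 2/3 * norm (z1 - z2) * (2/3)"
    using small by (intro mult_mono) auto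
  finally have contract: "norm (w1 - w2) \<le> 2/3 * norm (z1 - z2) * (2/3)" .
  have "norm (z1 - z2) = norm s * norm (w1 ^ n - w2 ^ n)"
    unfolding diff by (simp add: norm_mult)
  also have "\<dots> \<le> 2 * (real n * (2/3) ^ m * norm (w1 - w2))"
    using s small unfolding m by (intro mult_mono norm_power_diff_le) auto
  also have "\<dots> \<le> 2 * (real n * (2/3) ^ m * (2/3 * norm (z1 - z2) * (2/3)))"
    using contract by (intro mult_left_mono) auto
  also have "\<dots> = c * norm (z1 - z2)"
    unfolding c_def m by (simp add: power_add mult_ac)
  finally have "norm (z1 - z2) \<le> c * norm (z1 - z2)" .
  moreover have "c < 1"
    unfolding c_def by (rule two_mult_geometric_lt_1[OF n])
  ultimately have "norm (z1 - z2) = 0"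
    by (auto simp: mult_le_cancel_right1)
  then show ?thesis
    by simp
qed

lemma norm_lt_one_plus_inverse_if_other_root:
  fixes z a s :: "'a::real_normed_field"
  assumes n: "n \<ge> 6" and s: "norm s \<le> 2"
    and root: "z ^ n * (z - 2) = s" and other: "a ^ n * (a - 2) = s"
    and large: "3/2 \<le> norm a" and "z \<noteq> a"
  shows "norm z < 1 + 1 / real n"
proof (rule ccontr)
  assume "\<not> norm z < 1 + 1 / real n"
  then have "1 + 1 / real n \<le> norm z"
    by simp
  moreover have "norm (z ^ n * (z - 2)) \<le> 2"
    using root s by simp
  ultimately have "3/2 \<le> norm z"
    using three_halves_le_norm_if_root[OF n] by blast
  then have "z = a"
    using large_roots_unique[OF n s root other _ large] by simp
  with \<open>z \<noteq> a\<close> show False ..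
qed

lemma norm_lt_one_plus_inverse_if_other_root_of_real:
  fixes z :: "'a::real_normed_field" and a s :: real
  assumes "n \<ge> 6" "\<bar>s\<bar> \<le> 2" "a ^ n * (a - 2) = s" "3/2 \<le> \<bar>a\<bar>"
    and "z ^ n * (z - 2) = of_real s" "z \<noteq> of_real a"
  shows "norm z < 1 + 1 / real n"
  by (rule norm_lt_one_plus_inverse_if_other_root[of n "of_real s" z "of_real a"])
    (use assms in auto)

lemma tendsto_power_one_plus_1:
  fixes x :: "nat \<Rightarrow> real"
  assumes "0 \<le> c" "c < 1" and small: "\<forall>\<^sub>F n in sequentially. \<bar>x n\<bar> \<le> c ^ n"
  shows "(\<lambda>n. (1 + x n) ^ n) \<longlonglongrightarrow> 1"
proof (rule tendsto_sandwich)
  have "(\<lambda>n. real n * x n) \<longlonglongrightarrow> 0"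
  proof (rule tendsto_0_le[where K = 1])
    show "(\<lambda>n. real n * c ^ n) \<longlonglongrightarrow> 0"
      using powser_times_n_limit_0[of c] assms by simp
    show "\<forall>\<^sub>F n in sequentially. norm (real n * x n) \<le> norm (real n * c ^ n) * 1"
      using small by eventually_elim (simp add: abs_mult mult_left_mono)
  qed
  then show "(\<lambda>n. 1 + real n * x n) \<longlonglongrightarrow> 1" "(\<lambda>n. exp (real n * x n)) \<longlonglongrightarrow> 1"
    by (auto intro: tendsto_eq_intros)
  have "\<forall>\<^sub>F n in sequentially. -1 \<le> x n"
    using small
  proof eventually_elim
    case (elim n)
    moreover have "c ^ n \<le> 1"
      using assms by (intro power_le_one) auto
    ultimately show ?case
      by (simp add: abs_le_iff)
  qed
  then show "\<forall>\<^sub>F n in sequentially. 1 + real n * x n \<le> (1 + x n) ^ n"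
    by eventually_elim (rule Bernoulli_inequality)
  show "\<forall>\<^sub>F n in sequentially. (1 + x n) ^ n \<le> exp (real n * x n)"
    using \<open>\<forall>\<^sub>F n in sequentially. -1 \<le> x n\<close>
    by eventually_elim (auto simp: exp_of_nat_mult intro: power_mono)
qed

lemma le_inverse_power_if_power_mult_eq_1:
  fixes x y b :: real
  assumes "0 < b" "b \<le> y" "y ^ n * x = 1"
  shows "x \<le> (1 / b) ^ n"
proof -
  have "x = 1 / y ^ n"
    using assms by (simp add: eq_divide_eq mult.commute)
  also have "\<dots> \<le> 1 / b ^ n"
    using assms by (intro divide_left_mono power_mono mult_pos_pos zero_less_power) auto
  finally show ?thesis
    by (simp add: power_divide)
qed

lemma perturbed_roots_asymptotics:
  fixes k r :: "nat \<Rightarrow> real"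
  assumes k: "\<forall>\<^sub>F n in sequentially. 0 < k n \<and> (2 + 2 * k n) ^ n * k n = 1"
    and r: "\<forall>\<^sub>F n in sequentially. 0 < r n \<and> r n < 1/4 \<and> (2 - 2 * r n) ^ n * r n = 1"
  shows "(\<lambda>n. 2 ^ n * k n) \<longlonglongrightarrow> 1" and "(\<lambda>n. r n / k n) \<longlonglongrightarrow> 1"
proof -
  have power_eq: "(1 + x) ^ n = 1 / (2 ^ n * \<bar>x\<bar>)"
    if "(2 + 2 * x) ^ n * \<bar>x\<bar> = 1" for x :: real and n
  proof -
    have "2 ^ n * \<bar>x\<bar> * (1 + x) ^ n = 1"
      using that by (simp add: mult_ac flip: power_mult_distrib)
    then show ?thesis
      by (cases "x = 0") (auto simp: eq_divide_eq mult_ac)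
  qed
  have "\<forall>\<^sub>F n in sequentially. \<bar>k n\<bar> \<le> (1/2) ^ n"
    using k
  proof eventually_elim
    case (elim n)
    then show ?case
      using le_inverse_power_if_power_mult_eq_1[of 2 "2 + 2 * k n"] by simp
  qed
  then have K: "(\<lambda>n. (1 + k n) ^ n) \<longlonglongrightarrow> 1"
    by (rule tendsto_power_one_plus_1[rotated 2]) auto
  have "\<forall>\<^sub>F n in sequentially. \<bar>- r n\<bar> \<le> (1 / (3/2)) ^ n"
    using r
  proof eventually_elim
    case (elim n)
    then show ?case
      using le_inverse_power_if_power_mult_eq_1[of "3/2" "2 - 2 * r n"] by simp
  qed
  then have R: "(\<lambda>n. (1 + - r n) ^ n) \<longlonglongrightarrow> 1"
    by (rule tendsto_power_one_plus_1[rotated 2]) auto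
  have K_eq: "\<forall>\<^sub>F n in sequentially. (1 + k n) ^ n = 1 / (2 ^ n * k n)"
    using k by eventually_elim (simp add: power_eq)
  have R_eq: "\<forall>\<^sub>F n in sequentially. (1 + - r n) ^ n = 1 / (2 ^ n * r n)"
    using r
  proof eventually_elim
    case (elim n)
    then show ?case
      using power_eq[of "- r n" n] by simp
  qed
  have "(\<lambda>n. 1 / (1 + k n) ^ n) \<longlonglongrightarrow> 1"
    using tendsto_divide[OF tendsto_const K] by simp
  moreover have "\<forall>\<^sub>F n in sequentially. 1 / (1 + k n) ^ n = 2 ^ n * k n"
    using K_eq by eventually_elim simp
  ultimately show "(\<lambda>n. 2 ^ n * k n) \<longlonglongrightarrow> 1"
    by (rule Lim_transform_eventually)
  have "(\<lambda>n. (1 + k n) ^ n / (1 + - r n) ^ n) \<longlonglongrightarrow> 1"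
    using tendsto_divide[OF K R] by simp
  moreover have "\<forall>\<^sub>F n in sequentially. (1 + k n) ^ n / (1 + - r n) ^ n = r n / k n"
    using K_eq R_eq by eventually_elim simp
  ultimately show "(\<lambda>n. r n / k n) \<longlonglongrightarrow> 1"
    by (rule Lim_transform_eventually)
qed

theorem proposition10:
  fixes \<kappa> :: "nat \<Rightarrow> real"
  assumes kappa: "\<And>n. n \<ge> 1 \<Longrightarrow> 0 < \<kappa> n \<and> \<kappa> n < 1/2 \<and> (2 + 2 * \<kappa> n) ^ n * \<kappa> n = 1"
  shows "(\<forall>n\<ge>1. f_poly n (2 + 2 * \<kappa> n) = 0)
    \<and> (\<lambda>n. 2 ^ n * \<kappa> n) \<longlonglongrightarrow> 1
    \<and> (\<exists>r :: nat \<Rightarrow> real.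
          (\<forall>n\<ge>5. 0 < r n \<and> g_poly n (2 - 2 * r n) = 0)
        \<and> (\<lambda>n. r n / \<kappa> n) \<longlonglongrightarrow> 1
        \<and> (\<forall>n\<ge>1. \<forall>z::complex.
              f_poly n z = 0 \<and> z \<noteq> complex_of_real (2 + 2 * \<kappa> n)
                \<longrightarrow> 1 - 1 / real n < norm z)
        \<and> (\<forall>n\<ge>1. \<forall>z::complex.
              g_poly n z = 0 \<and> (n \<ge> 5 \<longrightarrow> z \<noteq> complex_of_real (2 - 2 * r n))
                \<longrightarrow> 1 - 1 / real n < norm z)
        \<and> (\<forall>n\<ge>6. \<forall>z::complex.
              f_poly n z = 0 \<and> z \<noteq> complex_of_real (2 + 2 * \<kappa> n)
                \<longrightarrow> norm z < 1 + 1 / real n)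
        \<and> (\<forall>n\<ge>6. \<forall>z::complex.
              g_poly n z = 0 \<and> z \<noteq> complex_of_real (2 - 2 * r n)
                \<longrightarrow> norm z < 1 + 1 / real n))"
proof -
  obtain r :: "nat \<Rightarrow> real"
    where r: "\<And>n. n \<ge> 4 \<Longrightarrow> 0 < r n \<and> r n < 1/4 \<and> g_poly n (2 - 2 * r n) = 0"
    using g_poly_real_root by metis
  have f_root: "f_poly n (2 + 2 * \<kappa> n) = 0" if "n \<ge> 1" for n
    using kappa[OF that] by (simp add: f_poly_two_plus_eq_0_iff)
  have "\<forall>\<^sub>F n in sequentially. 0 < \<kappa> n \<and> (2 + 2 * \<kappa> n) ^ n * \<kappa> n = 1"
    using kappa by (auto intro: eventually_sequentiallyI[of 1])
  moreover have "\<forall>\<^sub>F n in sequentially. 0 < r n \<and> r n < 1/4 \<and> (2 - 2 * r n) ^ n * r n = 1"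
    using r by (auto intro: eventually_sequentiallyI[of 4] simp: g_poly_two_minus_eq_0_iff)
  ultimately have "(\<lambda>n. 2 ^ n * \<kappa> n) \<longlonglongrightarrow> 1 \<and> (\<lambda>n. r n / \<kappa> n) \<longlonglongrightarrow> 1"
    by (blast intro: perturbed_roots_asymptotics)
  moreover have "norm z < 1 + 1 / real n"
    if "n \<ge> 6" "f_poly n z = 0" "z \<noteq> complex_of_real (2 + 2 * \<kappa> n)" for n z
    by (rule norm_lt_one_plus_inverse_if_other_root_of_real[of n 2 "2 + 2 * \<kappa> n"])
      (use that kappa[of n] f_root[of n] in \<open>auto simp: f_poly_eq_0_iff\<close>)
  moreover have "norm z < 1 + 1 / real n"
    if "n \<ge> 6" "g_poly n z = 0" "z \<noteq> complex_of_real (2 - 2 * r n)" for n z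
    by (rule norm_lt_one_plus_inverse_if_other_root_of_real[of n "-2" "2 - 2 * r n"])
      (use that r[of n] in \<open>auto simp: g_poly_eq_0_iff\<close>)
  moreover have "1 - 1 / real n < norm z"
    if "n \<ge> 1" "f_poly n z = 0 \<or> g_poly n z = 0" for n and z :: complex
    using that by (auto simp: f_poly_eq_0_iff g_poly_eq_0_iff intro!: one_minus_inverse_lt_norm)
  ultimately show ?thesis
    using f_root r by (intro conjI exI[of _ r]) auto
qed

end
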